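(* Let $G$ be a digraph and $f$ a discrete Morse function on $G$. Then for any allowed elementary path $v_0v_1\cdots v_n$ in $G$ there is at most one index $i\in\{0,\dots,n\}$ with $f(v_i)=0$.
   Context: A digraph $G=(V,E)$ consists of a set $V$ and $E\subseteq(V\times V)\setminus\{(v,v)\}$; $(u,v)\in E$ is written $u\to v$. An allowed elementary $n$-path is a sequence $v_0\cdots v_n$ of vertices with $v_{i-1}\to v_i\in E$ for $1\le i\le n$. A map $f:V\to[0,+\infty)$ is a discrete Morse function on $G$ if for every allowed elementary path $v_0\cdots v_n$: (i) there is at most one index $i$ with $f(v_i)=0$ such that $v_0\cdots v_{i-1}v_{i+1}\cdots v_n$ is an allowed elementary $(n-1)$-path; (ii) there is at most one vertex $u$ with $f(u)=0$ such that for some $-1\le j\le n$ the sequence $v_0\cdots v_juv_{j+1}\cdots v_n$ (meaning $uv_0\cdots v_n$ if $j=-1$, $v_0\cdots v_nu$ if $j=n$) is an allowed elementary $(n+1)$-path. *)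

theory Defs
  imports Complex_Main
begin

definition digraph :: "'a set \<Rightarrow> ('a \<times> 'a) set \<Rightarrow> bool" where
  "digraph V E \<longleftrightarrow> E \<subseteq> (V \<times> V) - {(v, v) | v. True}"

text \<open>An allowed elementary n-path v0...vn is represented by the list [v0,...,vn]
  (length n+1); consecutive vertices must be joined by an edge.\<close>
definition allowed_path :: "'a set \<Rightarrow> ('a \<times> 'a) set \<Rightarrow> 'a list \<Rightarrow> bool" where
  "allowed_path V E p \<longleftrightarrow> p \<noteq> [] \<and> set p \<subseteq> V \<and>
     (\<forall>i. Suc i < length p \<longrightarrow> (p ! i, p ! Suc i) \<in> E)"

text \<open>Deleting the vertex at index i, and inserting u at position k
  (k = j+1 for j in {-1,...,n}, i.e. k in {0,...,n+1}).\<close>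
definition del_at :: "nat \<Rightarrow> 'a list \<Rightarrow> 'a list" where
  "del_at i p = take i p @ drop (Suc i) p"

definition ins_at :: "nat \<Rightarrow> 'a \<Rightarrow> 'a list \<Rightarrow> 'a list" where
  "ins_at k u p = take k p @ u # drop k p"

definition discrete_morse :: "'a set \<Rightarrow> ('a \<times> 'a) set \<Rightarrow> ('a \<Rightarrow> real) \<Rightarrow> bool" where
  "discrete_morse V E f \<longleftrightarrow>
     (\<forall>v\<in>V. 0 \<le> f v) \<and>
     (\<forall>p. allowed_path V E p \<longrightarrow>
        (\<forall>i i'. i < length p \<and> f (p ! i) = 0 \<and> allowed_path V E (del_at i p) \<and>
                i' < length p \<and> f (p ! i') = 0 \<and> allowed_path V E (del_at i' p)
                \<longrightarrow> i = i') \<and>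
        (\<forall>u u'. u \<in> V \<and> f u = 0 \<and> (\<exists>k\<le>length p. allowed_path V E (ins_at k u p)) \<and>
                u' \<in> V \<and> f u' = 0 \<and> (\<exists>k\<le>length p. allowed_path V E (ins_at k u' p))
                \<longrightarrow> u = u'))"

end

theory Submission
  imports Defs
begin

text \<open>If \<open>v\<^sub>i\<close> and \<open>v\<^sub>j\<close> with \<open>i < j\<close> both had value 0, then in the subpath
  \<open>v\<^sub>i \<cdots> v\<^sub>j\<close> both endpoints could be deleted, leaving allowed paths; these are two
  distinct indices of value 0, contradicting condition (i) for that subpath.\<close>

lemma allowed_path_take:
  "allowed_path V E p \<Longrightarrow> 0 < n \<Longrightarrow> allowed_path V E (take n p)"
  unfolding allowed_path_def by (auto dest: in_set_takeD)

lemma allowed_path_drop: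
  "allowed_path V E p \<Longrightarrow> n < length p \<Longrightarrow> allowed_path V E (drop n p)"
  unfolding allowed_path_def by (auto dest: in_set_dropD)

lemma allowed_path_del_at_first:
  "allowed_path V E p \<Longrightarrow> 1 < length p \<Longrightarrow> allowed_path V E (del_at 0 p)"
  unfolding del_at_def by (simp add: allowed_path_drop)

lemma allowed_path_del_at_last:
  "allowed_path V E p \<Longrightarrow> 1 < length p \<Longrightarrow> allowed_path V E (del_at (length p - 1) p)"
  unfolding del_at_def by (simp add: allowed_path_take)

lemma discrete_morse_removable_zero_unique:
  assumes "discrete_morse V E f" "allowed_path V E p"
    and "i < length p" "f (p ! i) = 0" "allowed_path V E (del_at i p)"
    and "i' < length p" "f (p ! i') = 0" "allowed_path V E (del_at i' p)"
  shows "i = i'"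
  using assms unfolding discrete_morse_def by blast

lemma discrete_morse_zeros_not_before:
  assumes "discrete_morse V E f" "allowed_path V E p"
    and "i < j" "j < length p" "f (p ! i) = 0" "f (p ! j) = 0"
  shows False
proof -
  define q where "q = drop i (take (Suc j) p)"
  have q: "allowed_path V E q"
    unfolding q_def using assms by (intro allowed_path_drop allowed_path_take) auto
  have length_q: "length q = Suc (j - i)"
    unfolding q_def using assms by auto
  have "f (q ! 0) = 0" "f (q ! (length q - 1)) = 0"
    unfolding q_def using assms by auto
  moreover have "allowed_path V E (del_at 0 q)" "allowed_path V E (del_at (length q - 1) q)"
    using allowed_path_del_at_first[OF q] allowed_path_del_at_last[OF q] length_q \<open>i < j\<close>
    by simp_all
  ultimately have "0 = length q - 1"
    using discrete_morse_removable_zero_unique[OF assms(1) q] length_q by simp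
  then show False
    using length_q \<open>i < j\<close> by simp
qed

theorem lemma4p3:
  fixes V :: "'a set" and E :: "('a \<times> 'a) set" and f :: "'a \<Rightarrow> real" and p :: "'a list"
  assumes "digraph V E"
    and "discrete_morse V E f"
    and "allowed_path V E p"
  shows "\<forall>i j. i < length p \<and> f (p ! i) = 0 \<and> j < length p \<and> f (p ! j) = 0 \<longrightarrow> i = j"
  using discrete_morse_zeros_not_before[OF assms(2,3)] by (metis linorder_neqE_nat)

end
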